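(* Let $\lambda\ge0$, $\delta>0$, $0<a<b$, let $\rho_c$ and $D$ be as in the context, let $0\le\eta<\infty$, let $Q$ be regular superadditive, and let $q\colon\mathbb{R}\times\mathbb{R}\to[0,\infty]$ be measurable. Assume that for all $s<t$ and $x<y$, $$D\int_s^t\int_{\mathbb{R}}\Big[\rho_{b-a}(s,x,u,z)+\rho_a(u,z,t,y)\Big]q(u,z)\,dz\,du\le\eta+Q(s,t).$$ Then $q\in\mathcal N(\rho_b,\rho_a,(b/a)^{1/2},\eta,Q)$.
   Context: For $t>0$, $z\in\mathbb{R}$ let $p(t,z)=(4\pi)^{-1/2}\delta t z^{-3/2}\exp\{-(\delta t-2\sqrt{\lambda}z)^2/(4z)\}\mathbf 1_{z>0}$; for $c>0$, $\rho_c(s,x,t,y)=c\,p(c(t-s),c(y-x))$ if $s<t$ and $0$ otherwise. $D=\left(\frac{b}{b-a}\right)^{3/2}\exp[\frac32 l(\frac{a}{b-a})]$ with $l(\alpha)=\max_{\tau\ge\alpha\vee1/\alpha}[\ln(1+\tau)-\frac{\tau-\alpha}{1+\tau}\ln(\alpha\tau)]$. $Q\colon\{(s,t):s<t\}\to[0,\infty)$ is regular superadditive if $Q(s,u)+Q(u,t)\le Q(s,t)$ for $s<u<t$ and $Q(s,t)$ is right-continuous in $s$ and left-continuous in $t$. For transition densities $p,p^*$ on $\mathbb{R}$, $C\ge1$, $\eta\in[0,\infty)$ and regular superadditive $Q$, we write $q\in\mathcal N(p,p^*,C,\eta,Q)$ if $q\ge0$ is measurable on $\mathbb{R}\times\mathbb{R}$,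 $\int_s^t\int_{\mathbb{R}}p(s,x,u,z)q(u,z)p^*(u,z,t,y)\,dz\,du\le[\eta+Q(s,t)]p^*(s,x,t,y)$ for all $s<t$, $x,y$, and $p\le Cp^*$ everywhere. *)

theory Defs
  imports "HOL-Analysis.Analysis"
begin

definition pdens :: "real \<Rightarrow> real \<Rightarrow> real \<Rightarrow> real \<Rightarrow> real" where
  "pdens lam del t z =
     (if z > 0 then (4 * pi) powr (-1/2) * del * t * z powr (-3/2)
        * exp (- ((del * t - 2 * sqrt lam * z)\<^sup>2) / (4 * z)) else 0)"

definition rho :: "real \<Rightarrow> real \<Rightarrow> real \<Rightarrow> real \<Rightarrow> real \<Rightarrow> real \<Rightarrow> real \<Rightarrow> real" where
  "rho lam del c s x t y = (if s < t then c * pdens lam del (c * (t - s)) (c * (y - x)) else 0)"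

definition lfun :: "real \<Rightarrow> real" where
  "lfun \<alpha> = Sup {ln (1 + \<tau>) - (\<tau> - \<alpha>) / (1 + \<tau>) * ln (\<alpha> * \<tau>) | \<tau>. \<tau> \<ge> max \<alpha> (1 / \<alpha>)}"

definition Dconst :: "real \<Rightarrow> real \<Rightarrow> real" where
  "Dconst a b = (b / (b - a)) powr (3/2) * exp (3/2 * lfun (a / (b - a)))"

definition regular_superadditive :: "(real \<Rightarrow> real \<Rightarrow> real) \<Rightarrow> bool" where
  "regular_superadditive Q \<longleftrightarrow>
     (\<forall>s t. s < t \<longrightarrow> Q s t \<ge> 0) \<and>
     (\<forall>s u t. s < u \<and> u < t \<longrightarrow> Q s u + Q u t \<le> Q s t) \<and>
     (\<forall>s t. s < t \<longrightarrow> continuous (at_right s) (\<lambda>s'. Q s' t)) \<and>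
     (\<forall>s t. s < t \<longrightarrow> continuous (at_left t) (\<lambda>t'. Q s t'))"

definition classN ::
  "(real \<Rightarrow> real \<Rightarrow> real \<Rightarrow> real \<Rightarrow> real) \<Rightarrow> (real \<Rightarrow> real \<Rightarrow> real \<Rightarrow> real \<Rightarrow> real)
   \<Rightarrow> real \<Rightarrow> real \<Rightarrow> (real \<Rightarrow> real \<Rightarrow> real) \<Rightarrow> (real \<Rightarrow> real \<Rightarrow> ennreal) \<Rightarrow> bool" where
  "classN p ps C \<eta> Q q \<longleftrightarrow>
     C \<ge> 1 \<and> \<eta> \<ge> 0 \<and> regular_superadditive Q \<and>
     (\<lambda>(u, z). q u z) \<in> borel_measurable borel \<and>
     (\<forall>s t x y. s < t \<longrightarrow>
        (\<integral>\<^sup>+ u. (\<integral>\<^sup>+ z. ennreal (p s x u z) * q u z * ennreal (ps u z t y) \<partial>lborel)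
                    * indicator {s<..<t} u \<partial>lborel)
        \<le> ennreal (\<eta> + Q s t) * ennreal (ps s x t y)) \<and>
     (\<forall>s x t y. p s x t y \<le> C * ps s x t y)"

end

theory Submission
  imports Defs
begin

text \<open>
  Everything rests on the pointwise 3G inequality: for \<open>s < u < t\<close> and \<open>x < z < y\<close>,
  \<open>\<rho>\<^sub>b(s,x,u,z) \<rho>\<^sub>a(u,z,t,y) \<le> D\<^sub>0 (\<rho>\<^sub>b\<^sub>-\<^sub>a(s,x,u,z) + \<rho>\<^sub>a(u,z,t,y)) \<rho>\<^sub>a(s,x,t,y)\<close> with
  \<open>D\<^sub>0 = (b M / (b - a))\<^bsup>3/2\<^esup>\<close>, \<open>M = max (b/(b-a)) (b/a)\<close>; taking \<open>\<tau> = M - 1\<close> in the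
  supremum defining \<open>l\<close> shows \<open>D\<^sub>0 \<le> D\<close>. Dividing by the left-hand side, the 3G inequality
  becomes \<open>1 \<le> (M/r)\<^bsup>3/2\<^esup> (\<surd>r \<theta>\<^bsup>3/2\<^esup> e\<^bsup>E\<^sub>1\<^esup> + \<surd>(1-r) (1-\<theta>)\<^bsup>3/2\<^esup> e\<^bsup>E\<^sub>2\<^esup>)\<close> with
  \<open>r = (b-a)/b\<close> and \<open>\<theta>\<close> the fraction of the space increment spent after \<open>z\<close>. If \<open>\<theta> \<ge> r\<close>
  the first term suffices since \<open>E\<^sub>1 \<ge> 0\<close>; otherwise convexity of \<open>exp\<close> with weight \<open>\<theta>/r\<close>
  applies, because the corresponding combination of the Gaussian exponents is a perfect square.
  Integrating the 3G inequality against \<open>q\<close> and using the hypothesis gives the integral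
  condition of the class; the comparison \<open>\<rho>\<^sub>b \<le> (b/a)\<^bsup>1/2\<^esup> \<rho>\<^sub>a\<close> is read off the closed form.
\<close>

definition gauss_kernel :: "real \<Rightarrow> real \<Rightarrow> real \<Rightarrow> real \<Rightarrow> real" where
  "gauss_kernel c T Z A = sqrt c * T * Z powr (-3/2) * exp (- (c * A\<^sup>2 / (4 * Z)))"

lemma gauss_kernel_nonneg: "0 \<le> c \<Longrightarrow> 0 \<le> T \<Longrightarrow> 0 \<le> gauss_kernel c T Z A"
  by (simp add: gauss_kernel_def)

lemma rho_eq_gauss_kernel:
  assumes "0 < c" "s < t" "x < y"
  shows "rho lam del c s x t y
    = (4 * pi) powr (-1/2) * del * gauss_kernel c (t - s) (y - x) (del * (t - s) - 2 * sqrt lam * (y - x))"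
proof -
  define T where "T = t - s"
  define Z where "Z = y - x"
  have Z: "0 < Z"
    using assms by (simp add: Z_def)
  have "c * (c * (c * Z) powr (-3/2)) = c powr 2 * c powr (-3/2) * Z powr (-3/2)"
    using assms Z by (simp add: powr_mult power2_eq_square)
  also have "\<dots> = c powr (1/2) * Z powr (-3/2)"
    by (simp flip: powr_add)
  finally have p: "c * (c * (c * Z) powr (-3/2)) = sqrt c * Z powr (-3/2)"
    using assms by (simp add: powr_half_sqrt)
  have e: "(del * (c * T) - 2 * sqrt lam * (c * Z))\<^sup>2 / (4 * (c * Z))
      = c * (del * T - 2 * sqrt lam * Z)\<^sup>2 / (4 * Z)"
    using assms Z by (simp add: power2_eq_square field_simps)
  have "rho lam del c s x t y = c * ((4 * pi) powr (-1/2) * del * (c * T) * (c * Z) powr (-3/2)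
      * exp (- ((del * (c * T) - 2 * sqrt lam * (c * Z))\<^sup>2) / (4 * (c * Z))))"
    using assms Z by (simp add: rho_def pdens_def T_def Z_def)
  also have "\<dots> = (4 * pi) powr (-1/2) * del * T * (c * (c * (c * Z) powr (-3/2)))
      * exp (- ((del * (c * T) - 2 * sqrt lam * (c * Z))\<^sup>2 / (4 * (c * Z))))"
    by (simp add: ac_simps)
  also have "\<dots> = (4 * pi) powr (-1/2) * del * gauss_kernel c T Z (del * T - 2 * sqrt lam * Z)"
    unfolding p e gauss_kernel_def by (simp add: ac_simps)
  finally show ?thesis
    by (simp add: T_def Z_def)
qed

lemma rho_eq_0:
  assumes "0 < c" "\<not> (s < t \<and> x < y)"
  shows "rho lam del c s x t y = 0"
  using assms by (auto simp: rho_def pdens_def zero_less_mult_iff)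

lemma rho_nonneg:
  assumes "0 < c" "0 \<le> del"
  shows "0 \<le> rho lam del c s x t y"
  using assms by (auto simp: rho_def pdens_def)

lemma gauss_kernel_le_scaled:
  fixes a b T Z A :: real
  assumes "0 < a" "a \<le> b" "0 \<le> T" "0 < Z"
  shows "gauss_kernel b T Z A \<le> (b / a) powr (1/2) * gauss_kernel a T Z A"
proof -
  have "exp (- (b * A\<^sup>2 / (4 * Z))) \<le> exp (- (a * A\<^sup>2 / (4 * Z)))"
    using assms by (simp add: divide_right_mono mult_right_mono)
  then have "gauss_kernel b T Z A \<le> sqrt b * T * Z powr (-3/2) * exp (- (a * A\<^sup>2 / (4 * Z)))"
    using assms unfolding gauss_kernel_def by (auto intro: mult_left_mono)
  also have "\<dots> = (b / a) powr (1/2) * gauss_kernel a T Z A"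
    using assms by (simp add: gauss_kernel_def powr_half_sqrt real_sqrt_divide)
  finally show ?thesis .
qed

lemma rho_le_scaled:
  assumes "0 < a" "a \<le> b" "0 \<le> del"
  shows "rho lam del b s x t y \<le> (b / a) powr (1/2) * rho lam del a s x t y"
proof (cases "s < t \<and> x < y")
  case True
  then show ?thesis
    using assms gauss_kernel_le_scaled[OF assms(1,2), of "t - s" "y - x"]
    by (simp add: rho_eq_gauss_kernel mult_left_mono mult.left_commute)
next
  case False
  then show ?thesis
    using assms by (simp add: rho_eq_0)
qed

lemma binary_entropy_ge:
  fixes p :: real
  assumes "0 < p" "p < 1"
  shows "-1 \<le> p * ln p + (1 - p) * ln (1 - p)"
proof -
  have "p * ln (1/p) \<le> p * (1/p - 1)" "(1 - p) * ln (1/(1 - p)) \<le> (1 - p) * (1/(1 - p) - 1)"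
    using assms by (intro mult_left_mono ln_le_minus_one; simp)+
  then show ?thesis
    using assms by (simp add: ln_div algebra_simps)
qed

lemma weighted_exp_sum_ge:
  fixes p X Y E1 E2 :: real
  assumes "0 < p" "p < 1" "0 < X" "0 < Y"
  shows "exp (p * ln (X / p) + (1 - p) * ln (Y / (1 - p)) + (p * E1 + (1 - p) * E2))
    \<le> X * exp E1 + Y * exp E2"
proof -
  define u where "u = ln (X / p) + E1"
  define v where "v = ln (Y / (1 - p)) + E2"
  have "exp ((1 - p) *\<^sub>R v + p *\<^sub>R u) \<le> (1 - p) * exp v + p * exp u"
    using assms by (intro convex_onD[OF exp_convex]) auto
  also have "\<dots> = X * exp E1 + Y * exp E2"
    using assms by (simp add: u_def v_def exp_add)
  finally show ?thesis
    by (simp add: u_def v_def algebra_simps)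
qed

lemma two_term_ge_one_if_le:
  fixes r \<theta> M E1 E2 :: real
  assumes "0 < r" "r < 1" "r \<le> \<theta>" "\<theta> < 1" "1 / r \<le> M" "0 \<le> E1"
  shows "1 \<le> (M / r) powr (3/2)
    * (sqrt r * \<theta> powr (3/2) * exp E1 + sqrt (1 - r) * (1 - \<theta>) powr (3/2) * exp E2)"
proof -
  have "(1 / r) powr 3 * r powr 2 = 1 / r"
    using assms
    by (simp add: powr_divide powr_diff flip: powr_add) (simp add: power2_eq_square power3_eq_cube)
  then have "1 \<le> (1 / r) powr 3 * r powr 2"
    using assms by simp
  also have "(1 / r) powr 3 = (1 / r / r) powr (3/2)"
    using assms by (simp add: powr_divide powr_mult powr_powr flip: powr_add)
  also have "\<dots> \<le> (M / r) powr (3/2)"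
    using assms by (intro powr_mono2 divide_right_mono) auto
  also have "r powr 2 = sqrt r * r powr (3/2)"
    using assms by (simp add: powr_half_sqrt[symmetric] flip: powr_add)
  also have "\<dots> \<le> sqrt r * \<theta> powr (3/2)"
    using assms by (intro mult_left_mono powr_mono2) auto
  also have "\<dots> \<le> sqrt r * \<theta> powr (3/2) * exp E1"
    using assms by (auto simp: mult_le_cancel_left1 mult_less_0_iff)
  also have "\<dots> \<le> sqrt r * \<theta> powr (3/2) * exp E1 + sqrt (1 - r) * (1 - \<theta>) powr (3/2) * exp E2"
    using assms by simp
  finally show ?thesis
    using assms by (simp add: mult_left_mono)
qed

lemma two_term_ge_one_if_less:
  fixes r \<theta> M E1 E2 :: real
  assumes "0 < r" "r < 1" "0 < \<theta>" "\<theta> < r" "1 / r \<le> M" "1 / (1 - r) \<le> M"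
    and mix: "0 \<le> \<theta> / r * E1 + (1 - \<theta> / r) * E2"
  shows "1 \<le> (M / r) powr (3/2)
    * (sqrt r * \<theta> powr (3/2) * exp E1 + sqrt (1 - r) * (1 - \<theta>) powr (3/2) * exp E2)"
proof -
  define p where "p = \<theta> / r"
  define X where "X = sqrt r * \<theta> powr (3/2)"
  define Y where "Y = sqrt (1 - r) * (1 - \<theta>) powr (3/2)"
  define \<Phi> where "\<Phi> = p * ln (X / p) + (1 - p) * ln (Y / (1 - p))"
  have p: "0 < p" "p < 1" "\<theta> = p * r"
    using assms by (auto simp: p_def)
  have XY: "0 < X" "0 < Y"
    using assms by (auto simp: X_def Y_def)
  have "2 \<le> M"
    using assms by (cases "r \<le> 1/2") (auto simp: field_simps)
  then have lnM: "2/3 \<le> ln M"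
    using ln2_ge_two_thirds ln_mono[of 2 M] by linarith
  have lnr: "- ln M \<le> ln r" "- ln M \<le> ln (1 - r)"
    using assms ln_mono[of "1/r" M] ln_mono[of "1/(1-r)" M] by (auto simp: ln_div)
  have lnX: "ln (X / p) = 2 * ln r + ln p / 2"
    using assms p by (simp add: X_def ln_div ln_mult ln_sqrt) argo
  have "(1 - p) * r \<le> 1 - \<theta>"
    using assms p by (simp add: algebra_simps)
  then have "ln (1 - p) + ln r \<le> ln (1 - \<theta>)"
    using assms p ln_mono[of "(1 - p) * r" "1 - \<theta>"] by (simp add: ln_mult)
  then have lnY: "ln (1 - r) / 2 + 3/2 * ln r + ln (1 - p) / 2 \<le> ln (Y / (1 - p))"
    using assms p by (simp add: Y_def ln_div ln_mult ln_sqrt)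
  have "p * (- ln M) \<le> p * ln r" "(1 - p) * (- ln M) \<le> (1 - p) * ln (1 - r)"
    "(1 - p) * (ln (1 - r) / 2 + 3/2 * ln r + ln (1 - p) / 2) \<le> (1 - p) * ln (Y / (1 - p))"
    using p lnr lnY by (intro mult_left_mono; simp)+
  then have "0 \<le> 3/2 * (ln M - ln r) + \<Phi>"
    using binary_entropy_ge[OF p(1,2)] lnM unfolding \<Phi>_def lnX
    by (simp add: right_diff_distrib left_diff_distrib distrib_left add_divide_distrib diff_divide_distrib)
  then have "1 \<le> exp (3/2 * (ln M - ln r) + \<Phi>)"
    by simp
  also have "\<dots> = (M / r) powr (3/2) * exp \<Phi>"
    using assms \<open>2 \<le> M\<close> by (simp add: exp_add powr_def ln_div)
  also have "\<dots> \<le> (M / r) powr (3/2) * (X * exp E1 + Y * exp E2)"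
    using weighted_exp_sum_ge[OF p(1,2) XY, of E1 E2] mix
    by (intro mult_left_mono) (auto simp: \<Phi>_def p_def intro: order_trans[rotated])
  finally show ?thesis
    by (simp add: X_def Y_def)
qed

lemma two_term_ge_one:
  fixes r \<theta> M E1 E2 :: real
  assumes "0 < r" "r < 1" "0 < \<theta>" "\<theta> < 1" "1 / r \<le> M" "1 / (1 - r) \<le> M" "0 \<le> E1"
    and "\<theta> < r \<Longrightarrow> 0 \<le> \<theta> / r * E1 + (1 - \<theta> / r) * E2"
  shows "1 \<le> (M / r) powr (3/2)
    * (sqrt r * \<theta> powr (3/2) * exp E1 + sqrt (1 - r) * (1 - \<theta>) powr (3/2) * exp E2)"
  using assms two_term_ge_one_if_le[of r \<theta> M E1 E2] two_term_ge_one_if_less[of r \<theta> M E1 E2]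
  by (cases "r \<le> \<theta>") auto

lemma square_sum_div_le:
  fixes A1 A2 Z1 Z2 :: real
  assumes "0 < Z1" "0 < Z2"
  shows "(A1 + A2)\<^sup>2 / (Z1 + Z2) \<le> A1\<^sup>2 / Z1 + A2\<^sup>2 / Z2"
proof -
  have "A1\<^sup>2 / Z1 + A2\<^sup>2 / Z2 - (A1 + A2)\<^sup>2 / (Z1 + Z2) = (A1 * Z2 - A2 * Z1)\<^sup>2 / (Z1 * Z2 * (Z1 + Z2))"
    using assms by (simp add: divide_simps) (simp add: power2_eq_square algebra_simps)
  also have "\<dots> \<ge> 0"
    using assms by simp
  finally show ?thesis
    by simp
qed

lemma gaussian_exponent_mix:
  fixes a b A1 A2 Z1 Z2 :: real
  assumes "0 < a" "a < b" "0 < Z1" "0 < Z2"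
  defines "p \<equiv> Z2 * b / ((Z1 + Z2) * (b - a))"
  shows "p * (a * (A1\<^sup>2 / Z1 + A2\<^sup>2 / Z2 - (A1 + A2)\<^sup>2 / (Z1 + Z2)))
      + (1 - p) * (b * A1\<^sup>2 / Z1 - a * (A1 + A2)\<^sup>2 / (Z1 + Z2))
    = ((b - a) * A1 - a * A2)\<^sup>2 / ((b - a) * (Z1 + Z2))"
  using assms unfolding p_def by (simp add: divide_simps) (simp add: power2_eq_square algebra_simps)

lemma powr_neg_three_halves_ratio:
  fixes Z W :: real
  assumes "0 < Z" "0 < W"
  shows "Z powr (-3/2) * (Z / W) powr (3/2) = W powr (-3/2)"
  using assms by (simp add: powr_divide powr_minus divide_simps)

lemma gauss_kernel_split_left:
  fixes a b T1 T2 Z1 Z2 A1 A2 :: real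
  assumes "0 < a" "a < b" "0 < T2" "0 < Z1" "0 < Z2"
  shows "gauss_kernel b T1 Z1 A1 * gauss_kernel a T2 Z2 A2
      * (sqrt ((b - a) / b) * ((T1 + T2) / T2) * (Z2 / (Z1 + Z2)) powr (3/2)
         * exp (a * (A1\<^sup>2 / Z1 + A2\<^sup>2 / Z2 - (A1 + A2)\<^sup>2 / (Z1 + Z2)) / 4))
    = gauss_kernel (b - a) T1 Z1 A1 * gauss_kernel a (T1 + T2) (Z1 + Z2) (A1 + A2)"
proof -
  have s: "sqrt b * sqrt ((b - a) / b) = sqrt (b - a)"
    using assms by (simp flip: real_sqrt_mult)
  have t: "T2 * ((T1 + T2) / T2) = T1 + T2"
    using assms by simp
  have z: "Z2 powr (-3/2) * (Z2 / (Z1 + Z2)) powr (3/2) = (Z1 + Z2) powr (-3/2)"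
    using assms powr_neg_three_halves_ratio[of Z2 "Z1 + Z2"] by simp
  have e: "exp (- (b * A1\<^sup>2 / (4 * Z1))) * exp (- (a * A2\<^sup>2 / (4 * Z2)))
      * exp (a * (A1\<^sup>2 / Z1 + A2\<^sup>2 / Z2 - (A1 + A2)\<^sup>2 / (Z1 + Z2)) / 4)
    = exp (- ((b - a) * A1\<^sup>2 / (4 * Z1))) * exp (- (a * (A1 + A2)\<^sup>2 / (4 * (Z1 + Z2))))"
    by (simp add: mult_exp_exp diff_divide_distrib add_divide_distrib algebra_simps)
  have "gauss_kernel b T1 Z1 A1 * gauss_kernel a T2 Z2 A2
      * (sqrt ((b - a) / b) * ((T1 + T2) / T2) * (Z2 / (Z1 + Z2)) powr (3/2)
         * exp (a * (A1\<^sup>2 / Z1 + A2\<^sup>2 / Z2 - (A1 + A2)\<^sup>2 / (Z1 + Z2)) / 4))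
    = (sqrt b * sqrt ((b - a) / b)) * T1 * (T2 * ((T1 + T2) / T2)) * sqrt a * Z1 powr (-3/2)
      * (Z2 powr (-3/2) * (Z2 / (Z1 + Z2)) powr (3/2))
      * (exp (- (b * A1\<^sup>2 / (4 * Z1))) * exp (- (a * A2\<^sup>2 / (4 * Z2)))
         * exp (a * (A1\<^sup>2 / Z1 + A2\<^sup>2 / Z2 - (A1 + A2)\<^sup>2 / (Z1 + Z2)) / 4))"
    unfolding gauss_kernel_def by (simp only: ac_simps)
  also have "\<dots> = gauss_kernel (b - a) T1 Z1 A1 * gauss_kernel a (T1 + T2) (Z1 + Z2) (A1 + A2)"
    unfolding s t z e gauss_kernel_def by (simp only: ac_simps)
  finally show ?thesis .
qed

lemma gauss_kernel_split_right:
  fixes a b T1 T2 Z1 Z2 A1 A2 :: real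
  assumes "0 < a" "a < b" "0 < T1" "0 < Z1" "0 < Z2"
  shows "gauss_kernel b T1 Z1 A1 * gauss_kernel a T2 Z2 A2
      * (sqrt (a / b) * ((T1 + T2) / T1) * (Z1 / (Z1 + Z2)) powr (3/2)
         * exp ((b * A1\<^sup>2 / Z1 - a * (A1 + A2)\<^sup>2 / (Z1 + Z2)) / 4))
    = gauss_kernel a T2 Z2 A2 * gauss_kernel a (T1 + T2) (Z1 + Z2) (A1 + A2)"
proof -
  have s: "sqrt b * sqrt (a / b) = sqrt a"
    using assms by (simp flip: real_sqrt_mult)
  have t: "T1 * ((T1 + T2) / T1) = T1 + T2"
    using assms by simp
  have z: "Z1 powr (-3/2) * (Z1 / (Z1 + Z2)) powr (3/2) = (Z1 + Z2) powr (-3/2)"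
    using assms powr_neg_three_halves_ratio[of Z1 "Z1 + Z2"] by simp
  have e: "exp (- (b * A1\<^sup>2 / (4 * Z1))) * exp (- (a * A2\<^sup>2 / (4 * Z2)))
      * exp ((b * A1\<^sup>2 / Z1 - a * (A1 + A2)\<^sup>2 / (Z1 + Z2)) / 4)
    = exp (- (a * A2\<^sup>2 / (4 * Z2))) * exp (- (a * (A1 + A2)\<^sup>2 / (4 * (Z1 + Z2))))"
    by (simp add: mult_exp_exp diff_divide_distrib add_divide_distrib algebra_simps)
  have "gauss_kernel b T1 Z1 A1 * gauss_kernel a T2 Z2 A2
      * (sqrt (a / b) * ((T1 + T2) / T1) * (Z1 / (Z1 + Z2)) powr (3/2)
         * exp ((b * A1\<^sup>2 / Z1 - a * (A1 + A2)\<^sup>2 / (Z1 + Z2)) / 4))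
    = (sqrt b * sqrt (a / b)) * T2 * (T1 * ((T1 + T2) / T1)) * sqrt a * Z2 powr (-3/2)
      * (Z1 powr (-3/2) * (Z1 / (Z1 + Z2)) powr (3/2))
      * (exp (- (b * A1\<^sup>2 / (4 * Z1))) * exp (- (a * A2\<^sup>2 / (4 * Z2)))
         * exp ((b * A1\<^sup>2 / Z1 - a * (A1 + A2)\<^sup>2 / (Z1 + Z2)) / 4))"
    unfolding gauss_kernel_def by (simp only: ac_simps)
  also have "\<dots> = gauss_kernel a T2 Z2 A2 * gauss_kernel a (T1 + T2) (Z1 + Z2) (A1 + A2)"
    unfolding s t z e gauss_kernel_def by (simp only: ac_simps)
  finally show ?thesis .
qed

lemma gauss_kernel_three_G:
  fixes a b M T1 T2 Z1 Z2 A1 A2 :: real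
  assumes ab: "0 < a" "a < b" and pos: "0 < T1" "0 < T2" "0 < Z1" "0 < Z2"
    and M: "b / (b - a) \<le> M" "b / a \<le> M"
  shows "gauss_kernel b T1 Z1 A1 * gauss_kernel a T2 Z2 A2
    \<le> (b / (b - a) * M) powr (3/2) * (gauss_kernel (b - a) T1 Z1 A1 + gauss_kernel a T2 Z2 A2)
      * gauss_kernel a (T1 + T2) (Z1 + Z2) (A1 + A2)"
proof -
  define r where "r = (b - a) / b"
  define \<theta> where "\<theta> = Z2 / (Z1 + Z2)"
  define E1 where "E1 = a * (A1\<^sup>2 / Z1 + A2\<^sup>2 / Z2 - (A1 + A2)\<^sup>2 / (Z1 + Z2)) / 4"
  define E2 where "E2 = (b * A1\<^sup>2 / Z1 - a * (A1 + A2)\<^sup>2 / (Z1 + Z2)) / 4"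
  define L where "L = gauss_kernel b T1 Z1 A1 * gauss_kernel a T2 Z2 A2"
  define R1 where "R1 = sqrt r * ((T1 + T2) / T2) * \<theta> powr (3/2) * exp E1"
  define R2 where "R2 = sqrt (1 - r) * ((T1 + T2) / T1) * (1 - \<theta>) powr (3/2) * exp E2"
  have r: "0 < r" "r < 1" "1 - r = a / b" "M / r = b / (b - a) * M"
    using ab by (auto simp: r_def field_simps)
  have \<theta>: "0 < \<theta>" "\<theta> < 1" "1 - \<theta> = Z1 / (Z1 + Z2)"
    using pos by (auto simp: \<theta>_def field_simps)
  have "0 \<le> E1"
    using ab square_sum_div_le[OF pos(3,4), of A1 A2] by (simp add: E1_def)
  moreover have "0 \<le> \<theta> / r * E1 + (1 - \<theta> / r) * E2"
  proof -
    have p: "\<theta> / r = Z2 * b / ((Z1 + Z2) * (b - a))"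
      using ab pos by (simp add: r_def \<theta>_def field_simps)
    have quarter: "4 * (q * (x / 4) + (1 - q) * (y / 4)) = q * x + (1 - q) * y" for q x y :: real
      by simp
    have "4 * (\<theta> / r * E1 + (1 - \<theta> / r) * E2)
      = \<theta> / r * (a * (A1\<^sup>2 / Z1 + A2\<^sup>2 / Z2 - (A1 + A2)\<^sup>2 / (Z1 + Z2)))
        + (1 - \<theta> / r) * (b * A1\<^sup>2 / Z1 - a * (A1 + A2)\<^sup>2 / (Z1 + Z2))"
      unfolding E1_def E2_def by (rule quarter)
    also have "\<dots> = ((b - a) * A1 - a * A2)\<^sup>2 / ((b - a) * (Z1 + Z2))"
      unfolding p by (rule gaussian_exponent_mix[OF ab pos(3,4)])
    finally have "4 * (\<theta> / r * E1 + (1 - \<theta> / r) * E2)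
      = ((b - a) * A1 - a * A2)\<^sup>2 / ((b - a) * (Z1 + Z2))" .
    moreover have "0 \<le> ((b - a) * A1 - a * A2)\<^sup>2 / ((b - a) * (Z1 + Z2))"
      using ab pos by simp
    ultimately show ?thesis
      by simp
  qed
  moreover have "1 / r \<le> M" "1 / (1 - r) \<le> M"
    using M r by (simp_all add: r_def)
  ultimately have "1 \<le> (M / r) powr (3/2)
      * (sqrt r * \<theta> powr (3/2) * exp E1 + sqrt (1 - r) * (1 - \<theta>) powr (3/2) * exp E2)"
    using two_term_ge_one r(1,2) \<theta>(1,2) by blast
  also have "\<dots> \<le> (M / r) powr (3/2) * (R1 + R2)"
    using pos r \<theta> unfolding R1_def R2_def
    by (intro mult_left_mono add_mono) (auto simp: field_simps intro!: mult_left_le)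
  finally have one: "1 \<le> (M / r) powr (3/2) * (R1 + R2)" .
  have LR1: "L * R1 = gauss_kernel (b - a) T1 Z1 A1 * gauss_kernel a (T1 + T2) (Z1 + Z2) (A1 + A2)"
    unfolding L_def R1_def r_def \<theta>_def E1_def by (rule gauss_kernel_split_left[OF ab pos(2-4)])
  have LR2: "L * R2 = gauss_kernel a T2 Z2 A2 * gauss_kernel a (T1 + T2) (Z1 + Z2) (A1 + A2)"
    unfolding L_def R2_def r(3) \<theta>(3) E2_def by (rule gauss_kernel_split_right[OF ab pos(1,3,4)])
  have "0 \<le> L"
    unfolding L_def using ab pos by (intro mult_nonneg_nonneg gauss_kernel_nonneg) auto
  then have "L \<le> L * ((M / r) powr (3/2) * (R1 + R2))"
    using mult_left_mono[OF one] by simp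
  also have "\<dots> = (M / r) powr (3/2) * (L * R1 + L * R2)"
    by (simp add: algebra_simps)
  also have "\<dots> = (M / r) powr (3/2) * (gauss_kernel (b - a) T1 Z1 A1 + gauss_kernel a T2 Z2 A2)
      * gauss_kernel a (T1 + T2) (Z1 + Z2) (A1 + A2)"
    unfolding LR1 LR2 by (simp add: algebra_simps)
  finally show ?thesis
    unfolding L_def r(4) .
qed

lemma rho_three_G:
  fixes a b M :: real
  assumes "0 \<le> del" "0 < a" "a < b" "s < u" "u < t" "x < z" "z < y"
    and "b / (b - a) \<le> M" "b / a \<le> M"
  shows "rho lam del b s x u z * rho lam del a u z t y
    \<le> (b / (b - a) * M) powr (3/2) * (rho lam del (b - a) s x u z + rho lam del a u z t y)
      * rho lam del a s x t y"
proof -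
  define K where "K = (4 * pi) powr (-1/2) * del"
  define A where "A = (\<lambda>T Z. del * T - 2 * sqrt lam * Z)"
  have K: "0 \<le> K"
    using assms by (simp add: K_def)
  have "t - s = (u - s) + (t - u)" "y - x = (z - x) + (y - z)"
    "A (t - s) (y - x) = A (u - s) (z - x) + A (t - u) (y - z)"
    by (simp_all add: A_def algebra_simps)
  then have "rho lam del a s x t y
      = K * gauss_kernel a ((u - s) + (t - u)) ((z - x) + (y - z)) (A (u - s) (z - x) + A (t - u) (y - z))"
    using assms by (simp add: rho_eq_gauss_kernel K_def A_def)
  moreover have "rho lam del c s x u z = K * gauss_kernel c (u - s) (z - x) (A (u - s) (z - x))"
    "rho lam del a u z t y = K * gauss_kernel a (t - u) (y - z) (A (t - u) (y - z))"
    if "0 < c" for c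
    using assms that by (simp_all add: rho_eq_gauss_kernel K_def A_def)
  ultimately show ?thesis
    using assms mult_left_mono[OF gauss_kernel_three_G[of a b "u - s" "t - u" "z - x" "y - z" M
        "A (u - s) (z - x)" "A (t - u) (y - z)"] mult_nonneg_nonneg[OF K K]]
    by (simp add: algebra_simps)
qed

lemma ln_one_plus_max_le_lfun:
  fixes \<alpha> :: real
  assumes "0 < \<alpha>"
  shows "ln (1 + max \<alpha> (1 / \<alpha>)) \<le> lfun \<alpha>"
proof -
  define f where "f = (\<lambda>\<tau>. ln (1 + \<tau>) - (\<tau> - \<alpha>) / (1 + \<tau>) * ln (\<alpha> * \<tau>))"
  define \<tau>0 where "\<tau>0 = max \<alpha> (1 / \<alpha>)"
  have "1 \<le> \<tau>0"
  proof (cases "1 \<le> \<alpha>")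
    case False
    then have "1 \<le> 1 / \<alpha>"
      using assms by simp
    then show ?thesis
      by (simp add: \<tau>0_def)
  qed (simp add: \<tau>0_def)
  have "f \<tau> \<le> ln 2 - ln \<alpha> + (1 + \<alpha>) * \<alpha>" if "\<tau>0 \<le> \<tau>" for \<tau>
  proof -
    have \<tau>: "1 \<le> \<tau>"
      using \<open>1 \<le> \<tau>0\<close> that by simp
    have "1 / \<alpha> \<le> \<tau>"
      using that by (simp add: \<tau>0_def)
    then have \<alpha>\<tau>: "1 \<le> \<alpha> * \<tau>"
      using assms by (simp add: field_simps)
    have "ln (1 + \<tau>) \<le> ln (2 * \<tau>)"
      using \<tau> by (intro ln_mono) auto
    then have "ln (1 + \<tau>) - ln (\<alpha> * \<tau>) \<le> ln 2 - ln \<alpha>"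
      using \<tau> assms by (simp add: ln_mult)
    moreover have "(1 + \<alpha>) / (1 + \<tau>) * ln (\<alpha> * \<tau>) \<le> (1 + \<alpha>) / (1 + \<tau>) * (\<alpha> * \<tau>)"
      using assms \<tau> \<alpha>\<tau> ln_le_minus_one[of "\<alpha> * \<tau>"] by (intro mult_left_mono) auto
    moreover have "(1 + \<alpha>) / (1 + \<tau>) * (\<alpha> * \<tau>) \<le> (1 + \<alpha>) * \<alpha>"
      using assms \<tau> by (simp add: field_simps)
    moreover have "f \<tau> = ln (1 + \<tau>) - ln (\<alpha> * \<tau>) + (1 + \<alpha>) / (1 + \<tau>) * ln (\<alpha> * \<tau>)"
      using \<tau> unfolding f_def by (simp add: field_simps)
    ultimately show ?thesis
      by linarith
  qed
  then have "bdd_above (f ` {\<tau>0..})"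
    by (intro bdd_aboveI[where M = "ln 2 - ln \<alpha> + (1 + \<alpha>) * \<alpha>"]) auto
  then have "f \<tau>0 \<le> Sup (f ` {\<tau>0..})"
    by (intro cSup_upper) auto
  moreover have "f \<tau>0 = ln (1 + \<tau>0)"
    using assms by (cases "1 / \<alpha> \<le> \<alpha>") (simp_all add: f_def \<tau>0_def max_def)
  moreover have "{ln (1 + \<tau>) - (\<tau> - \<alpha>) / (1 + \<tau>) * ln (\<alpha> * \<tau>) | \<tau>. \<tau> \<ge> max \<alpha> (1 / \<alpha>)} = f ` {\<tau>0..}"
    by (auto simp: f_def \<tau>0_def)
  ultimately show ?thesis
    unfolding lfun_def by (simp add: \<tau>0_def)
qed

lemma Dconst_ge:
  fixes a b :: real
  assumes "0 < a" "a < b"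
  shows "(b / (b - a) * max (b / (b - a)) (b / a)) powr (3/2) \<le> Dconst a b"
proof -
  define M where "M = max (b / (b - a)) (b / a)"
  have "M = 1 + max (a / (b - a)) (1 / (a / (b - a)))"
    using assms by (simp add: M_def max_def field_simps)
  then have "ln M \<le> lfun (a / (b - a))"
    using assms ln_one_plus_max_le_lfun[of "a / (b - a)"] by simp
  moreover have "0 < M"
    using assms by (simp add: M_def max_def)
  ultimately have "M powr (3/2) \<le> exp (3/2 * lfun (a / (b - a)))"
    by (simp add: powr_def)
  moreover have "(b / (b - a) * M) powr (3/2) = (b / (b - a)) powr (3/2) * M powr (3/2)"
    using assms \<open>0 < M\<close> by (simp add: powr_mult[symmetric])
  ultimately show ?thesis
    unfolding Dconst_def M_def[symmetric] by (simp add: mult_left_mono)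
qed

lemma borel_measurable_lborel_pair:
  "(\<lambda>(u, z). q u z) \<in> borel_measurable borel \<Longrightarrow>
    (\<lambda>(u, z). q u z :: ennreal) \<in> borel_measurable (lborel \<Otimes>\<^sub>M (lborel :: real measure))"
  by (simp add: lborel_prod)

lemma nn_integral_interval_mono_cmult:
  fixes f g :: "real \<Rightarrow> real \<Rightarrow> ennreal"
  assumes [measurable]: "(\<lambda>(u, z). g u z) \<in> borel_measurable (lborel \<Otimes>\<^sub>M lborel)"
    and le: "\<And>u z. s < u \<Longrightarrow> u < t \<Longrightarrow> f u z \<le> c * g u z"
  shows "(\<integral>\<^sup>+ u. (\<integral>\<^sup>+ z. f u z \<partial>lborel) * indicator {s<..<t} u \<partial>lborel)
    \<le> c * (\<integral>\<^sup>+ u. (\<integral>\<^sup>+ z. g u z \<partial>lborel) * indicator {s<..<t} u \<partial>lborel)"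
proof -
  have "(\<integral>\<^sup>+ z. f u z \<partial>lborel) \<le> c * (\<integral>\<^sup>+ z. g u z \<partial>lborel)" if "s < u" "u < t" for u
    using that le by (auto simp flip: nn_integral_cmult intro: nn_integral_mono)
  then have "(\<integral>\<^sup>+ u. (\<integral>\<^sup>+ z. f u z \<partial>lborel) * indicator {s<..<t} u \<partial>lborel)
      \<le> (\<integral>\<^sup>+ u. c * ((\<integral>\<^sup>+ z. g u z \<partial>lborel) * indicator {s<..<t} u) \<partial>lborel)"
    by (intro nn_integral_mono) (simp split: split_indicator)
  also have "\<dots> = c * (\<integral>\<^sup>+ u. (\<integral>\<^sup>+ z. g u z \<partial>lborel) * indicator {s<..<t} u \<partial>lborel)"
    by (rule nn_integral_cmult) measurable
  finally show ?thesis .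
qed

lemma rho_convolution_le:
  fixes a b M :: real and q :: "real \<Rightarrow> real \<Rightarrow> ennreal"
  assumes "0 < del" "0 < a" "a < b" "b / (b - a) \<le> M" "b / a \<le> M"
    and [measurable]: "(\<lambda>(u, z). q u z) \<in> borel_measurable (lborel \<Otimes>\<^sub>M lborel)"
  shows "(\<integral>\<^sup>+ u. (\<integral>\<^sup>+ z. ennreal (rho lam del b s x u z) * q u z * ennreal (rho lam del a u z t y) \<partial>lborel)
        * indicator {s<..<t} u \<partial>lborel)
    \<le> ennreal ((b / (b - a) * M) powr (3/2) * rho lam del a s x t y)
      * (\<integral>\<^sup>+ u. (\<integral>\<^sup>+ z. (ennreal (rho lam del (b - a) s x u z) + ennreal (rho lam del a u z t y))
        * q u z \<partial>lborel) * indicator {s<..<t} u \<partial>lborel)"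
proof (rule nn_integral_interval_mono_cmult)
  show "(\<lambda>(u, z). (ennreal (rho lam del (b - a) s x u z) + ennreal (rho lam del a u z t y)) * q u z)
      \<in> borel_measurable (lborel \<Otimes>\<^sub>M lborel)"
    unfolding rho_def pdens_def by measurable
next
  fix u z
  assume u: "s < u" "u < t"
  show "ennreal (rho lam del b s x u z) * q u z * ennreal (rho lam del a u z t y)
    \<le> ennreal ((b / (b - a) * M) powr (3/2) * rho lam del a s x t y)
      * ((ennreal (rho lam del (b - a) s x u z) + ennreal (rho lam del a u z t y)) * q u z)"
  proof (cases "x < z \<and> z < y")
    case True
    have "ennreal (rho lam del b s x u z * rho lam del a u z t y)
      \<le> ennreal ((b / (b - a) * M) powr (3/2) * rho lam del a s x t y
          * (rho lam del (b - a) s x u z + rho lam del a u z t y))"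
      using rho_three_G[of del a b s u t x z y M lam] assms u True by (intro ennreal_leI) (simp add: ac_simps)
    then have "ennreal (rho lam del b s x u z) * ennreal (rho lam del a u z t y)
      \<le> ennreal ((b / (b - a) * M) powr (3/2) * rho lam del a s x t y)
        * (ennreal (rho lam del (b - a) s x u z) + ennreal (rho lam del a u z t y))"
      using assms by (simp add: rho_nonneg ennreal_mult')
    then have "ennreal (rho lam del b s x u z) * ennreal (rho lam del a u z t y) * q u z
      \<le> ennreal ((b / (b - a) * M) powr (3/2) * rho lam del a s x t y)
        * (ennreal (rho lam del (b - a) s x u z) + ennreal (rho lam del a u z t y)) * q u z"
      by (rule mult_right_mono) simp
    then show ?thesis
      by (simp only: ac_simps)
  next
    case False
    then have "rho lam del b s x u z = 0 \<or> rho lam del a u z t y = 0"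
      using assms u by (auto simp: rho_eq_0)
    then show ?thesis
      by auto
  qed
qed

lemma ennreal_mult_le_mult_of_le:
  fixes D D' r :: real
  assumes "0 \<le> D" "D \<le> D'" "0 \<le> r" "ennreal D' * I \<le> B"
  shows "ennreal (D * r) * I \<le> B * ennreal r"
proof -
  have "ennreal D * I \<le> ennreal D' * I"
    using assms by (intro mult_right_mono ennreal_leI) auto
  also have "\<dots> \<le> B"
    by (fact assms(4))
  finally have "ennreal D * I \<le> B" .
  then have "ennreal r * (ennreal D * I) \<le> ennreal r * B"
    by (rule mult_left_mono) simp
  then show ?thesis
    using assms by (simp add: ennreal_mult ac_simps)
qed

theorem corollary2p3:
  fixes lam del a b \<eta> :: real and Q :: "real \<Rightarrow> real \<Rightarrow> real"
    and q :: "real \<Rightarrow> real \<Rightarrow> ennreal"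
  assumes "lam \<ge> 0" and "del > 0" and "0 < a" and "a < b" and "\<eta> \<ge> 0"
    and "regular_superadditive Q"
    and "(\<lambda>(u, z). q u z) \<in> borel_measurable borel"
    and "\<And>s t x y. s < t \<Longrightarrow> x < y \<Longrightarrow>
      ennreal (Dconst a b) *
        (\<integral>\<^sup>+ u. (\<integral>\<^sup>+ z. (ennreal (rho lam del (b - a) s x u z) + ennreal (rho lam del a u z t y))
                      * q u z \<partial>lborel) * indicator {s<..<t} u \<partial>lborel)
      \<le> ennreal (\<eta> + Q s t)"
  shows "classN (rho lam del b) (rho lam del a) ((b / a) powr (1/2)) \<eta> Q q"
proof -
  define D0 where "D0 = (b / (b - a) * max (b / (b - a)) (b / a)) powr (3/2)"
  have "D0 \<le> Dconst a b"
    unfolding D0_def using assms(3,4) by (rule Dconst_ge)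
  have "(\<integral>\<^sup>+ u. (\<integral>\<^sup>+ z. ennreal (rho lam del b s x u z) * q u z * ennreal (rho lam del a u z t y) \<partial>lborel)
        * indicator {s<..<t} u \<partial>lborel)
      \<le> ennreal (\<eta> + Q s t) * ennreal (rho lam del a s x t y)" if "s < t" for s t x y
  proof -
    let ?I = "\<integral>\<^sup>+ u. (\<integral>\<^sup>+ z. (ennreal (rho lam del (b - a) s x u z) + ennreal (rho lam del a u z t y))
        * q u z \<partial>lborel) * indicator {s<..<t} u \<partial>lborel"
    have "ennreal (D0 * rho lam del a s x t y) * ?I \<le> ennreal (\<eta> + Q s t) * ennreal (rho lam del a s x t y)"
    proof (cases "x < y")
      case True
      with assms(8)[OF \<open>s < t\<close>] \<open>D0 \<le> Dconst a b\<close> show ?thesis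
        using assms(2,3) by (intro ennreal_mult_le_mult_of_le) (auto simp: D0_def rho_nonneg)
    qed (use assms(3) in \<open>simp add: rho_eq_0\<close>)
    with rho_convolution_le[OF assms(2-4) max.cobounded1 max.cobounded2 borel_measurable_lborel_pair[OF assms(7)]]
    show ?thesis
      unfolding D0_def by (rule order_trans)
  qed
  moreover have "1 \<le> (b / a) powr (1/2)"
    using assms(3,4) by (simp add: powr_half_sqrt)
  ultimately show ?thesis
    unfolding classN_def using assms rho_le_scaled[of a b del lam] by simp
qed

end
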